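(* For every nonempty standard subset $J\subseteq\{1,\dots,t\}$ one has $\mathrm{Ext}^1_{\mathcal A_{t,1}}(\Delta(J),\Delta(J))=0$.
   Context: Let $k$ be an algebraically closed field and $t\ge 3$ an integer. $\mathcal A_{t,1}$ is the quotient of the path algebra over $k$ of the quiver with vertices $1,\dots,t$, arrows $\alpha_i:i\to i+1$ ($1\le i\le t-1$) and $\beta_j:j+2\to j$ ($1\le j\le t-2$), by the relations $\beta_1\alpha_2=0$ and $\beta_{i+1}\alpha_{i+2}=\alpha_i\beta_i$ for $1\le i\le t-3$ (compositions of linear maps, written right to left). Modules are finite-dimensional and identified with representations $(M_i;\alpha_i,\beta_j)$ of the quiver satisfying these relations. A subset $J\subseteq\{1,\dots,t\}$ is standard if $j\in J$ implies $j+1\notin J$. For a nonempty standard subset $J$, the standard module $\Delta(J)$ has $\Delta(J)_i=k^{l}$ where $l=\#\{j\in J: j\le i\}$, with standard basis $e_1,\dots,e_l$; each $\alpha_i$ is the natural inclusion $e_h\mapsto e_h$, and each $\beta_j$ sends $e_h\mapsto e_{h-1}$ for $h\ge 2$ and $e_1\mapsto 0$. *)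

theory Defs
  imports "HOL-Computational_Algebra.Polynomial" "Jordan_Normal_Form.Matrix"
begin

text \<open>A finite-dimensional representation of the quiver of A_{t,1}: at vertex i the space
  k^(dimv M i) (every finite-dimensional space is isomorphic to one of these);
  alp M i : vertex i -> i+1 and bet M j : vertex j+2 -> j are matrices.\<close>
record 'k qrep =
  dimv :: "nat \<Rightarrow> nat"
  alp  :: "nat \<Rightarrow> 'k mat"
  bet  :: "nat \<Rightarrow> 'k mat"

definition is_rep :: "nat \<Rightarrow> 'k::field qrep \<Rightarrow> bool" where
  "is_rep t M \<longleftrightarrow>
     (\<forall>i\<in>{1..t-1}. alp M i \<in> carrier_mat (dimv M (i+1)) (dimv M i)) \<and>
     (\<forall>j\<in>{1..t-2}. bet M j \<in> carrier_mat (dimv M j) (dimv M (j+2))) \<and>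
     bet M 1 * alp M 2 = 0\<^sub>m (dimv M 1) (dimv M 2) \<and>
     (\<forall>i\<in>{1..t-3}. bet M (i+1) * alp M (i+2) = alp M i * bet M i)"

definition is_hom :: "nat \<Rightarrow> 'k::field qrep \<Rightarrow> 'k qrep \<Rightarrow> (nat \<Rightarrow> 'k mat) \<Rightarrow> bool" where
  "is_hom t M N f \<longleftrightarrow>
     (\<forall>i\<in>{1..t}. f i \<in> carrier_mat (dimv N i) (dimv M i)) \<and>
     (\<forall>i\<in>{1..t-1}. f (i+1) * alp M i = alp N i * f i) \<and>
     (\<forall>j\<in>{1..t-2}. f j * bet M j = bet N j * f (j+2))"

definition short_exact :: "nat \<Rightarrow> 'k::field qrep \<Rightarrow> 'k qrep \<Rightarrow> 'k qrep
    \<Rightarrow> (nat \<Rightarrow> 'k mat) \<Rightarrow> (nat \<Rightarrow> 'k mat) \<Rightarrow> bool" where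
  "short_exact t N E M f g \<longleftrightarrow>
     is_rep t N \<and> is_rep t E \<and> is_rep t M \<and> is_hom t N E f \<and> is_hom t E M g \<and>
     (\<forall>i\<in>{1..t}.
        (\<forall>u\<in>carrier_vec (dimv N i). f i *\<^sub>v u = 0\<^sub>v (dimv E i) \<longrightarrow> u = 0\<^sub>v (dimv N i)) \<and>
        (\<forall>v\<in>carrier_vec (dimv E i).
            g i *\<^sub>v v = 0\<^sub>v (dimv M i) \<longleftrightarrow> (\<exists>u\<in>carrier_vec (dimv N i). v = f i *\<^sub>v u)) \<and>
        (\<forall>w\<in>carrier_vec (dimv M i). \<exists>v\<in>carrier_vec (dimv E i). g i *\<^sub>v v = w))"

text \<open>Ext^1(M,N) = 0 (Yoneda description): every extension of M by N splits.\<close>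
definition Ext1_zero :: "nat \<Rightarrow> 'k::field qrep \<Rightarrow> 'k qrep \<Rightarrow> bool" where
  "Ext1_zero t M N \<longleftrightarrow>
     (\<forall>(E::'k qrep) f g. short_exact t N E M f g \<longrightarrow>
        (\<exists>s. is_hom t M E s \<and> (\<forall>i\<in>{1..t}. g i * s i = 1\<^sub>m (dimv M i))))"

definition standard :: "nat \<Rightarrow> nat set \<Rightarrow> bool" where
  "standard t J \<longleftrightarrow> J \<subseteq> {1..t} \<and> (\<forall>j\<in>J. j + 1 \<notin> J)"

text \<open>Standard module Delta(J); basis vector e_h is index h-1.\<close>
definition Delta :: "nat set \<Rightarrow> 'k::field qrep" where
  "Delta J = (let l = (\<lambda>i. card {j\<in>J. j \<le> i}) in
     \<lparr> dimv = l,
       alp = (\<lambda>i. mat (l (i+1)) (l i) (\<lambda>(r,c). if r = c then 1 else 0)),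
       bet = (\<lambda>j. mat (l j) (l (j+2)) (\<lambda>(r,c). if c = r + 1 then 1 else 0)) \<rparr>)"

definition alg_closed_field :: "'k::field itself \<Rightarrow> bool" where
  "alg_closed_field _ \<longleftrightarrow> (\<forall>p::'k poly. degree p > 0 \<longrightarrow> (\<exists>x. poly p x = 0))"

end

theory Submission
  imports Defs
begin

text \<open>
  An extension \<open>0 \<rightarrow> \<Delta>(J) \<rightarrow> E \<rightarrow> \<Delta>(J) \<rightarrow> 0\<close> is split by choosing, vertex by vertex,
  a preimage in \<open>E\<^sub>i\<close> of every basis vector \<open>e\<^sub>c\<close> of \<open>\<Delta>(J)\<^sub>i\<close>. A basis vector already
  present at \<open>i - 1\<close> is transported along \<open>\<alpha>\<close>, as it must be since \<open>\<alpha>\<close> acts on \<open>\<Delta>(J)\<close> by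
  inclusion; the relations of the algebra keep such a preimage compatible with \<open>\<beta>\<close>. A basis vector
  that is new at \<open>i \<in> J\<close> must moreover be sent by \<open>\<beta>\<^sub>i\<^sub>-\<^sub>2\<close> to the preimage of \<open>e\<^sub>c\<^sub>-\<^sub>1\<close>
  (or to \<open>0\<close>). Any preimage misses this only by an element of \<open>ker g = im f\<close>, and as \<open>J\<close> contains
  no two consecutive integers, \<open>\<beta>\<close> of \<open>\<Delta>(J)\<close> is onto at \<open>i - 2\<close>, so the defect is removed by
  subtracting an element of \<open>f(\<Delta>(J)\<^sub>i)\<close>.
\<close>

lemma mult_mat_vec_unit_vec:
  "A \<in> carrier_mat n m \<Longrightarrow> c < m \<Longrightarrow> A *\<^sub>v unit_vec m c = (col A c :: 'a::semiring_1 vec)"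
  by (intro eq_vecI) auto

lemma mult_mat_vec_zero_vec:
  "A \<in> carrier_mat n m \<Longrightarrow> A *\<^sub>v 0\<^sub>v m = (0\<^sub>v n :: 'a::semiring_0 vec)"
  by auto

lemma mat_eq_by_unit_vecs:
  fixes A B :: "'a::semiring_1 mat"
  assumes "A \<in> carrier_mat n m" "B \<in> carrier_mat n m"
    and "\<And>c. c < m \<Longrightarrow> A *\<^sub>v unit_vec m c = B *\<^sub>v unit_vec m c"
  shows "A = B"
  using assms by (intro mat_col_eqI) (auto simp: mult_mat_vec_unit_vec[symmetric])

lemma is_hom_alp_vec:
  assumes "is_rep t M" "is_rep t N" "is_hom t M N h" "1 \<le> i" "i < t"
    and "v \<in> carrier_vec (dimv M i)"
  shows "h (Suc i) *\<^sub>v (alp M i *\<^sub>v v) = alp N i *\<^sub>v (h i *\<^sub>v v)"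
proof -
  have "h (i+1) * alp M i = alp N i * h i"
    and "h (i+1) \<in> carrier_mat (dimv N (i+1)) (dimv M (i+1))" "h i \<in> carrier_mat (dimv N i) (dimv M i)"
    and "alp M i \<in> carrier_mat (dimv M (i+1)) (dimv M i)" "alp N i \<in> carrier_mat (dimv N (i+1)) (dimv N i)"
    using assms unfolding is_rep_def is_hom_def by auto
  then show ?thesis
    using assms(6) by (metis Suc_eq_plus1 assoc_mult_mat_vec)
qed

lemma is_hom_bet_vec:
  assumes "is_rep t M" "is_rep t N" "is_hom t M N h" "1 \<le> j" "j + 2 \<le> t"
    and "v \<in> carrier_vec (dimv M (j+2))"
  shows "h j *\<^sub>v (bet M j *\<^sub>v v) = bet N j *\<^sub>v (h (j+2) *\<^sub>v v)"
proof -
  have "h j * bet M j = bet N j * h (j+2)"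
    and "h j \<in> carrier_mat (dimv N j) (dimv M j)" "h (j+2) \<in> carrier_mat (dimv N (j+2)) (dimv M (j+2))"
    and "bet M j \<in> carrier_mat (dimv M j) (dimv M (j+2))" "bet N j \<in> carrier_mat (dimv N j) (dimv N (j+2))"
    using assms unfolding is_rep_def is_hom_def by auto
  then show ?thesis
    using assms(6) by (metis assoc_mult_mat_vec)
qed

lemma is_rep_bet_alp_vec:
  assumes "is_rep t M" "1 \<le> j" "j + 3 \<le> t" "v \<in> carrier_vec (dimv M (j+2))"
  shows "bet M (Suc j) *\<^sub>v (alp M (j+2) *\<^sub>v v) = alp M j *\<^sub>v (bet M j *\<^sub>v v)"
proof -
  have "bet M (j+1) * alp M (j+2) = alp M j * bet M j"
    and "bet M (j+1) \<in> carrier_mat (dimv M (j+1)) (dimv M (j+3))"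
    and "alp M (j+2) \<in> carrier_mat (dimv M (j+3)) (dimv M (j+2))"
    and "alp M j \<in> carrier_mat (dimv M (j+1)) (dimv M j)"
    and "bet M j \<in> carrier_mat (dimv M j) (dimv M (j+2))"
    using assms unfolding is_rep_def by (auto simp: numeral_3_eq_3)
  then show ?thesis
    using assms(4) by (metis Suc_eq_plus1 assoc_mult_mat_vec)
qed

lemma is_rep_bet_1_alp_2_vec:
  assumes "is_rep t M" "3 \<le> t" "v \<in> carrier_vec (dimv M 2)"
  shows "bet M 1 *\<^sub>v (alp M 2 *\<^sub>v v) = 0\<^sub>v (dimv M 1)"
proof -
  have "bet M 1 * alp M 2 = 0\<^sub>m (dimv M 1) (dimv M 2)"
    and "bet M 1 \<in> carrier_mat (dimv M 1) (dimv M 3)"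
    and "alp M 2 \<in> carrier_mat (dimv M 3) (dimv M 2)"
    using assms unfolding is_rep_def by (auto simp: numeral_3_eq_3 numeral_2_eq_2)
  then have "bet M 1 *\<^sub>v (alp M 2 *\<^sub>v v) = 0\<^sub>m (dimv M 1) (dimv M 2) *\<^sub>v v"
    using assms(3) by (metis assoc_mult_mat_vec)
  then show ?thesis
    using assms(3) by auto
qed

definition delta_dim :: "nat set \<Rightarrow> nat \<Rightarrow> nat" where
  "delta_dim J i = card {j\<in>J. j \<le> i}"

lemma dimv_Delta [simp]: "dimv (Delta J) = delta_dim J"
  and alp_Delta [simp]:
    "alp (Delta J) i = mat (delta_dim J (i+1)) (delta_dim J i) (\<lambda>(r,c). if r = c then 1 else 0)"
  and bet_Delta [simp]:
    "bet (Delta J) j = mat (delta_dim J j) (delta_dim J (j+2)) (\<lambda>(r,c). if c = r + 1 then 1 else 0)"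
  by (simp_all add: Delta_def Let_def delta_dim_def[abs_def])

lemma alp_Delta_carrier: "alp (Delta J) i \<in> carrier_mat (delta_dim J (Suc i)) (delta_dim J i)"
  and bet_Delta_carrier: "bet (Delta J) j \<in> carrier_mat (delta_dim J j) (delta_dim J (j+2))"
  by simp_all

lemma delta_dim_0: "0 \<notin> J \<Longrightarrow> delta_dim J 0 = 0"
  unfolding delta_dim_def by (auto intro: gr0I)

lemma delta_dim_Suc: "delta_dim J (Suc i) = delta_dim J i + (if Suc i \<in> J then 1 else 0)"
proof -
  have "{j\<in>J. j \<le> Suc i} = (if Suc i \<in> J then insert (Suc i) {j\<in>J. j \<le> i} else {j\<in>J. j \<le> i})"
    by (auto simp: le_Suc_eq)
  then show ?thesis
    unfolding delta_dim_def by simp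
qed

lemma delta_dim_mono: "i \<le> k \<Longrightarrow> delta_dim J i \<le> delta_dim J k"
  by (induction k) (auto simp: delta_dim_Suc le_Suc_eq)

lemma delta_dim_Suc_Suc_le: "standard t J \<Longrightarrow> delta_dim J (Suc (Suc i)) \<le> Suc (delta_dim J i)"
  unfolding standard_def by (auto simp: delta_dim_Suc)

lemma delta_dim_Suc_Suc_member:
  assumes "standard t J" "Suc (Suc k) \<in> J"
  shows "delta_dim J (Suc k) = delta_dim J k" and "delta_dim J (Suc (Suc k)) = Suc (delta_dim J k)"
  using assms unfolding standard_def by (auto simp: delta_dim_Suc)

lemma alp_Delta_unit_vec:
  "c < delta_dim J i \<Longrightarrow>
    alp (Delta J) i *\<^sub>v unit_vec (delta_dim J i) c = (unit_vec (delta_dim J (Suc i)) c :: 'k::field vec)"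
  by (subst mult_mat_vec_unit_vec[where n = "delta_dim J (Suc i)"]) (auto simp: unit_vec_def)

lemma bet_Delta_unit_vec:
  "c < delta_dim J (j+2) \<Longrightarrow>
    bet (Delta J) j *\<^sub>v unit_vec (delta_dim J (j+2)) c =
      (if c = 0 then 0\<^sub>v (delta_dim J j) else unit_vec (delta_dim J j) (c-1) :: 'k::field vec)"
  by (subst mult_mat_vec_unit_vec[where n = "delta_dim J j"]) (auto simp: unit_vec_def)

lemma bet_Delta_vCons:
  assumes "delta_dim J (j+2) = Suc (delta_dim J j)" "u \<in> carrier_vec (delta_dim J j)"
  shows "bet (Delta J) j *\<^sub>v vCons 0 u = (u :: 'k::field vec)"
proof (rule eq_vecI)
  fix r assume "r < dim_vec u"
  then have r: "r < delta_dim J j" using assms(2) by simp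
  then have row: "row (bet (Delta J) j) r = unit_vec (delta_dim J (j+2)) (r+1)"
    by (auto simp: unit_vec_def)
  have "(bet (Delta J) j *\<^sub>v vCons 0 u) $ r = unit_vec (delta_dim J (j+2)) (r+1) \<bullet> vCons 0 u"
    by (subst index_mult_mat_vec) (use r in simp, simp only: row)
  also have "\<dots> = u $ r"
    using assms r by (subst scalar_prod_left_unit[where n = "delta_dim J (j+2)"]) auto
  finally show "(bet (Delta J) j *\<^sub>v vCons 0 u) $ r = u $ r" .
qed (use assms in simp)

locale short_exact_seq =
  fixes t :: nat and N E M :: "'k::field qrep" and f g :: "nat \<Rightarrow> 'k mat"
  assumes short_exact: "short_exact t N E M f g"
begin

lemma reps: "is_rep t N" "is_rep t E" "is_rep t M"
  and homs: "is_hom t N E f" "is_hom t E M g"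
  using short_exact unfolding short_exact_def by auto

lemma f_carrier: "1 \<le> i \<Longrightarrow> i \<le> t \<Longrightarrow> f i \<in> carrier_mat (dimv E i) (dimv N i)"
  and g_carrier: "1 \<le> i \<Longrightarrow> i \<le> t \<Longrightarrow> g i \<in> carrier_mat (dimv M i) (dimv E i)"
  and alp_E_carrier: "1 \<le> i \<Longrightarrow> i < t \<Longrightarrow> alp E i \<in> carrier_mat (dimv E (Suc i)) (dimv E i)"
  and bet_E_carrier: "1 \<le> j \<Longrightarrow> j + 2 \<le> t \<Longrightarrow> bet E j \<in> carrier_mat (dimv E j) (dimv E (j+2))"
  using reps homs unfolding is_rep_def is_hom_def by auto

lemma ker_g_eq_im_f:
  "1 \<le> i \<Longrightarrow> i \<le> t \<Longrightarrow> v \<in> carrier_vec (dimv E i) \<Longrightarrow>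
    g i *\<^sub>v v = 0\<^sub>v (dimv M i) \<longleftrightarrow> (\<exists>u\<in>carrier_vec (dimv N i). v = f i *\<^sub>v u)"
  and g_surj:
  "1 \<le> i \<Longrightarrow> i \<le> t \<Longrightarrow> w \<in> carrier_vec (dimv M i) \<Longrightarrow>
    \<exists>v\<in>carrier_vec (dimv E i). g i *\<^sub>v v = w"
  using short_exact unfolding short_exact_def by auto

lemma g_f_vec: "1 \<le> i \<Longrightarrow> i \<le> t \<Longrightarrow> u \<in> carrier_vec (dimv N i) \<Longrightarrow>
    g i *\<^sub>v (f i *\<^sub>v u) = 0\<^sub>v (dimv M i)"
  using ker_g_eq_im_f[of i "f i *\<^sub>v u"] f_carrier[of i] by auto

lemma lift_along_bet:
  assumes k: "1 \<le> k" "k + 2 \<le> t"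
    and bet_N_surj: "\<And>u. u \<in> carrier_vec (dimv N k) \<Longrightarrow>
      \<exists>u'\<in>carrier_vec (dimv N (k+2)). bet N k *\<^sub>v u' = u"
    and w: "w \<in> carrier_vec (dimv M (k+2))"
    and z: "z \<in> carrier_vec (dimv E k)" "g k *\<^sub>v z = bet M k *\<^sub>v w"
  shows "\<exists>x\<in>carrier_vec (dimv E (k+2)). g (k+2) *\<^sub>v x = w \<and> bet E k *\<^sub>v x = z"
proof -
  have B: "bet E k \<in> carrier_mat (dimv E k) (dimv E (k+2))"
    and G: "g k \<in> carrier_mat (dimv M k) (dimv E k)"
    and G2: "g (k+2) \<in> carrier_mat (dimv M (k+2)) (dimv E (k+2))"
    and F: "f (k+2) \<in> carrier_mat (dimv E (k+2)) (dimv N (k+2))"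
    using bet_E_carrier g_carrier f_carrier k by simp_all
  obtain y where y: "y \<in> carrier_vec (dimv E (k+2))" "g (k+2) *\<^sub>v y = w"
    using g_surj[of "k+2" w] k w by auto
  have By: "bet E k *\<^sub>v y \<in> carrier_vec (dimv E k)"
    using B y(1) by simp
  have "g k *\<^sub>v (bet E k *\<^sub>v y - z) = g k *\<^sub>v (bet E k *\<^sub>v y) - g k *\<^sub>v z"
    using mult_minus_distrib_mat_vec[OF G By z(1)] .
  also have "\<dots> = 0\<^sub>v (dimv M k)"
    using is_hom_bet_vec[OF reps(2,3) homs(2) k y(1)] y(2) z(2) mult_mat_vec_carrier[OF G z(1)]
    by simp
  finally obtain u where u: "u \<in> carrier_vec (dimv N k)" "bet E k *\<^sub>v y - z = f k *\<^sub>v u"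
    using ker_g_eq_im_f[of k] By z(1) k by auto
  obtain u' where u': "u' \<in> carrier_vec (dimv N (k+2))" "bet N k *\<^sub>v u' = u"
    using bet_N_surj[OF u(1)] by blast
  have fu': "f (k+2) *\<^sub>v u' \<in> carrier_vec (dimv E (k+2))"
    using F u'(1) by simp
  define x where "x = y - f (k+2) *\<^sub>v u'"
  have "x \<in> carrier_vec (dimv E (k+2))"
    unfolding x_def using y(1) fu' by simp
  moreover have "g (k+2) *\<^sub>v x = w"
  proof -
    have "g (k+2) *\<^sub>v x = w - g (k+2) *\<^sub>v (f (k+2) *\<^sub>v u')"
      unfolding x_def using mult_minus_distrib_mat_vec[OF G2 y(1) fu'] y(2) by simp
    then show ?thesis
      using g_f_vec[of "k+2" u'] u'(1) k w by simp
  qed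
  moreover have "bet E k *\<^sub>v x = z"
  proof -
    have "bet E k *\<^sub>v (f (k+2) *\<^sub>v u') = f k *\<^sub>v u"
      using is_hom_bet_vec[OF reps(1,2) homs(1) k u'(1)] u'(2) by simp
    then have "bet E k *\<^sub>v x = bet E k *\<^sub>v y - (bet E k *\<^sub>v y - z)"
      unfolding x_def u(2) using mult_minus_distrib_mat_vec[OF B y(1) fu'] by simp
    then show ?thesis
      using By z(1) by auto
  qed
  ultimately show ?thesis by blast
qed

end

locale Delta_self_extension = short_exact_seq t "Delta J" E "Delta J" f g
  for t :: nat and J :: "nat set" and E :: "'k::field qrep" and f g +
  assumes standard: "standard t J"
begin

definition is_lift :: "nat \<Rightarrow> nat \<Rightarrow> 'k vec \<Rightarrow> 'k vec \<Rightarrow> bool" where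
  "is_lift i c z x \<longleftrightarrow> x \<in> carrier_vec (dimv E i) \<and> g i *\<^sub>v x = unit_vec (delta_dim J i) c \<and>
     (3 \<le> i \<longrightarrow> bet E (i-2) *\<^sub>v x = z)"

fun sec_col :: "nat \<Rightarrow> nat \<Rightarrow> 'k vec" where
  "sec_col 0 c = 0\<^sub>v 0"
| "sec_col (Suc i) c =
     (if c < delta_dim J i then alp E i *\<^sub>v sec_col i c
      else SOME x. is_lift (Suc i) c (if c = 0 then 0\<^sub>v (dimv E (i-1)) else sec_col (i-1) (c-1)) x)"

text \<open>The vector to which \<open>\<beta>\<^sub>j\<close> of \<open>E\<close> must send column \<open>c\<close> of the section at vertex
  \<open>j + 2\<close>, mirroring \<open>\<beta>\<^sub>j e\<^sub>c = e\<^sub>c\<^sub>-\<^sub>1\<close> in \<open>\<Delta>(J)\<close>.\<close>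

definition sec_below :: "nat \<Rightarrow> nat \<Rightarrow> 'k vec" where
  "sec_below j c = (if c = 0 then 0\<^sub>v (dimv E j) else sec_col j (c-1))"

lemma sec_col_Suc_old: "c < delta_dim J i \<Longrightarrow> sec_col (Suc i) c = alp E i *\<^sub>v sec_col i c"
  by simp

lemma sec_col_Suc_new:
  "\<not> c < delta_dim J i \<Longrightarrow> sec_col (Suc i) c = (SOME x. is_lift (Suc i) c (sec_below (i-1) c) x)"
  by (simp add: sec_below_def)

declare sec_col.simps(2) [simp del]

lemma zero_notin_J: "0 \<notin> J"
  using standard unfolding standard_def by auto

lemma sec_below_Suc:
  assumes "1 \<le> j" "j < t" "c < delta_dim J (j+2)"
  shows "sec_below (Suc j) c = alp E j *\<^sub>v sec_below j c"
proof (cases "c = 0")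
  case True
  then show ?thesis
    using mult_mat_vec_zero_vec[OF alp_E_carrier[OF assms(1,2)]] by (simp add: sec_below_def)
next
  case False
  then have "c - 1 < delta_dim J j"
    using delta_dim_Suc_Suc_le[OF standard, of j] assms(3) by simp
  then show ?thesis
    using False by (simp add: sec_below_def sec_col_Suc_old)
qed

lemma g_sec_below:
  assumes "1 \<le> j" "j \<le> t" "c < delta_dim J (j+2)"
    and "0 < c \<Longrightarrow> is_lift j (c-1) z (sec_col j (c-1))"
  shows "sec_below j c \<in> carrier_vec (dimv E j)"
    and "g j *\<^sub>v sec_below j c = bet (Delta J) j *\<^sub>v unit_vec (delta_dim J (j+2)) c"
  using assms mult_mat_vec_zero_vec[OF g_carrier[OF assms(1,2)]] bet_Delta_unit_vec[OF assms(3), where 'k='k]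
  by (auto simp: sec_below_def is_lift_def simp del: bet_Delta)

lemma is_lift_alp:
  assumes i: "1 \<le> i" "i < t" and c: "c < delta_dim J i"
    and x: "is_lift i c (sec_below (i-2) c) x"
  shows "is_lift (Suc i) c (sec_below (i-1) c) (alp E i *\<^sub>v x)"
proof -
  have xE: "x \<in> carrier_vec (dimv E i)"
    using x by (simp add: is_lift_def)
  have "g (Suc i) *\<^sub>v (alp E i *\<^sub>v x) = alp (Delta J) i *\<^sub>v unit_vec (delta_dim J i) c"
    using is_hom_alp_vec[OF reps(2,3) homs(2) i xE] x by (simp add: is_lift_def del: alp_Delta)
  also have "\<dots> = unit_vec (delta_dim J (Suc i)) c"
    using alp_Delta_unit_vec[OF c] .
  finally have g_alp_x: "g (Suc i) *\<^sub>v (alp E i *\<^sub>v x) = unit_vec (delta_dim J (Suc i)) c" .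
  have "bet E (i-1) *\<^sub>v (alp E i *\<^sub>v x) = sec_below (i-1) c" if "3 \<le> Suc i"
  proof (cases "i = 2")
    case True
    have "delta_dim J 2 \<le> 1"
      using delta_dim_Suc_Suc_le[OF standard, of 0] delta_dim_0[OF zero_notin_J]
      by (simp add: numeral_2_eq_2)
    then have "c = 0"
      using c True by simp
    then show ?thesis
      using is_rep_bet_1_alp_2_vec[OF reps(2) _ xE[unfolded True]] True i
      by (simp add: sec_below_def)
  next
    case False
    define j where "j = i - 2"
    have j: "i = Suc (Suc j)" "1 \<le> j"
      using that False by (simp_all add: j_def)
    have "bet E (i-1) *\<^sub>v (alp E i *\<^sub>v x) = alp E j *\<^sub>v (bet E j *\<^sub>v x)"
      using is_rep_bet_alp_vec[OF reps(2) j(2), of x] xE i j by simp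
    also have "\<dots> = alp E j *\<^sub>v sec_below j c"
      using x j by (simp add: is_lift_def)
    also have "\<dots> = sec_below (i-1) c"
      using sec_below_Suc[of j c] i j c by simp
    finally show ?thesis .
  qed
  then show ?thesis
    unfolding is_lift_def using g_alp_x alp_E_carrier[OF i] xE by simp
qed

lemma is_lift_exists_new:
  assumes i: "1 \<le> i" "i \<le> t" "i \<in> J"
    and below: "3 \<le> i \<Longrightarrow> sec_below (i-2) c \<in> carrier_vec (dimv E (i-2)) \<and>
      g (i-2) *\<^sub>v sec_below (i-2) c = bet (Delta J) (i-2) *\<^sub>v unit_vec (delta_dim J i) c"
  shows "\<exists>x. is_lift i c (sec_below (i-2) c) x"
proof (cases "3 \<le> i")
  case True
  define k where "k = i - 2"
  have k: "i = k + 2" "1 \<le> k"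
    using True by (simp_all add: k_def)
  have "delta_dim J (k+2) = Suc (delta_dim J k)"
    using delta_dim_Suc_Suc_member(2)[OF standard] i k by simp
  then have bet_surj: "\<exists>u'\<in>carrier_vec (dimv (Delta J) (k+2)). bet (Delta J) k *\<^sub>v u' = u"
    if "u \<in> carrier_vec (dimv (Delta J) k)" for u :: "'k vec"
    using bet_Delta_vCons[of J k u] that by (intro bexI[of _ "vCons 0 u"]) (auto simp del: bet_Delta)
  show ?thesis
    using lift_along_bet[OF k(2) _ bet_surj, of "unit_vec (delta_dim J i) c" "sec_below k c"]
      below True i k
    by (auto simp: is_lift_def)
next
  case False
  then show ?thesis
    using g_surj[of i "unit_vec (delta_dim J i) c"] i by (auto simp: is_lift_def)
qed

lemma is_lift_sec_col:
  "1 \<le> i \<Longrightarrow> i \<le> t \<Longrightarrow> c < delta_dim J i \<Longrightarrow> is_lift i c (sec_below (i-2) c) (sec_col i c)"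
proof (induction i arbitrary: c rule: less_induct)
  case (less i)
  then obtain i' where i: "i = Suc i'"
    by (cases i) auto
  show ?case
  proof (cases "c < delta_dim J i'")
    case True
    then have "1 \<le> i'"
      using delta_dim_0[OF zero_notin_J] by (cases i') auto
    then show ?thesis
      using is_lift_alp[of i' c "sec_col i' c"] less i True by (simp add: sec_col_Suc_old)
  next
    case False
    then have new: "i \<in> J" "c = delta_dim J i'"
      using less.prems(3) i delta_dim_Suc[of J i'] by (auto split: if_splits)
    have "\<exists>x. is_lift i c (sec_below (i-2) c) x"
    proof (rule is_lift_exists_new[OF less.prems(1,2) new(1)])
      assume "3 \<le> i"
      define k where "k = i - 2"
      have k: "i = k + 2" "1 \<le> k"
        using \<open>3 \<le> i\<close> by (simp_all add: k_def)
      have "c = delta_dim J k"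
        using new delta_dim_Suc_Suc_member(1)[OF standard, of k] i k by simp
      then have "0 < c \<Longrightarrow> is_lift k (c-1) (sec_below (k-2) (c-1)) (sec_col k (c-1))"
        using less.IH[of k "c-1"] less.prems k by simp
      then show "sec_below (i-2) c \<in> carrier_vec (dimv E (i-2)) \<and>
        g (i-2) *\<^sub>v sec_below (i-2) c = bet (Delta J) (i-2) *\<^sub>v unit_vec (delta_dim J i) c"
        using g_sec_below[of k c "sec_below (k-2) (c-1)"] less.prems k by simp
    qed
    then show ?thesis
      using someI_ex sec_col_Suc_new[of c i'] False i by simp
  qed
qed

definition sec :: "nat \<Rightarrow> 'k mat" where
  "sec i = mat (dimv E i) (delta_dim J i) (\<lambda>(r, c). sec_col i c $ r)"

lemma sec_carrier: "sec i \<in> carrier_mat (dimv E i) (delta_dim J i)"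
  by (simp add: sec_def)

lemma sec_unit_vec:
  assumes "1 \<le> i" "i \<le> t" "c < delta_dim J i"
  shows "sec i *\<^sub>v unit_vec (delta_dim J i) c = sec_col i c"
proof -
  have "sec_col i c \<in> carrier_vec (dimv E i)"
    using is_lift_sec_col[OF assms] by (simp add: is_lift_def)
  then show ?thesis
    using assms(3) by (auto simp: mult_mat_vec_unit_vec[OF sec_carrier] sec_def)
qed

lemma g_sec:
  assumes i: "1 \<le> i" "i \<le> t"
  shows "g i * sec i = 1\<^sub>m (delta_dim J i)"
proof (rule mat_eq_by_unit_vecs)
  fix c assume c: "c < delta_dim J i"
  have "(g i * sec i) *\<^sub>v unit_vec (delta_dim J i) c = g i *\<^sub>v sec_col i c"
    using assoc_mult_mat_vec[OF g_carrier[OF i] sec_carrier unit_vec_carrier] sec_unit_vec[OF i c]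
    by simp
  also have "\<dots> = unit_vec (delta_dim J i) c"
    using is_lift_sec_col[OF i c] by (simp add: is_lift_def)
  finally show "(g i * sec i) *\<^sub>v unit_vec (delta_dim J i) c = 1\<^sub>m (delta_dim J i) *\<^sub>v unit_vec (delta_dim J i) c"
    by simp
qed (use mult_carrier_mat[OF g_carrier[OF i] sec_carrier] in auto)

lemma sec_alp: 
  assumes i: "1 \<le> i" "i < t"
  shows "sec (Suc i) * alp (Delta J) i = alp E i * sec i"
proof (rule mat_eq_by_unit_vecs)
  fix c assume c: "c < delta_dim J i"
  have c': "c < delta_dim J (Suc i)"
    using c delta_dim_mono[of i "Suc i" J] by simp
  have "(sec (Suc i) * alp (Delta J) i) *\<^sub>v unit_vec (delta_dim J i) c
      = sec (Suc i) *\<^sub>v unit_vec (delta_dim J (Suc i)) c"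
    using assoc_mult_mat_vec[OF sec_carrier alp_Delta_carrier unit_vec_carrier]
      alp_Delta_unit_vec[OF c, where 'k='k]
    by (simp del: alp_Delta)
  also have "\<dots> = alp E i *\<^sub>v sec_col i c"
    using sec_unit_vec[of "Suc i" c] i c' c by (simp add: sec_col_Suc_old)
  also have "\<dots> = (alp E i * sec i) *\<^sub>v unit_vec (delta_dim J i) c"
    using assoc_mult_mat_vec[OF alp_E_carrier[OF i] sec_carrier unit_vec_carrier] sec_unit_vec[of i c] i c
    by simp
  finally show "(sec (Suc i) * alp (Delta J) i) *\<^sub>v unit_vec (delta_dim J i) c
      = (alp E i * sec i) *\<^sub>v unit_vec (delta_dim J i) c" .
qed (use mult_carrier_mat[OF sec_carrier alp_Delta_carrier]
    mult_carrier_mat[OF alp_E_carrier[OF i] sec_carrier] in auto)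

lemma sec_bet:
  assumes j: "1 \<le> j" "j + 2 \<le> t"
  shows "sec j * bet (Delta J) j = bet E j * sec (j+2)"
proof (rule mat_eq_by_unit_vecs)
  fix c assume c: "c < delta_dim J (j+2)"
  have "(sec j * bet (Delta J) j) *\<^sub>v unit_vec (delta_dim J (j+2)) c
      = sec j *\<^sub>v (if c = 0 then 0\<^sub>v (delta_dim J j) else unit_vec (delta_dim J j) (c-1))"
    using assoc_mult_mat_vec[OF sec_carrier bet_Delta_carrier unit_vec_carrier]
      bet_Delta_unit_vec[OF c, where 'k='k]
    by (simp del: bet_Delta)
  also have "\<dots> = sec_below j c"
  proof (cases "c = 0")
    case False
    then have "c - 1 < delta_dim J j"
      using c delta_dim_Suc_Suc_le[OF standard, of j] by simp
    then show ?thesis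
      using False sec_unit_vec[of j "c-1"] j by (simp add: sec_below_def)
  qed (simp add: sec_below_def mult_mat_vec_zero_vec[OF sec_carrier])
  also have "\<dots> = bet E j *\<^sub>v sec_col (j+2) c"
    using is_lift_sec_col[of "j+2" c] j c by (simp add: is_lift_def)
  also have "\<dots> = (bet E j * sec (j+2)) *\<^sub>v unit_vec (delta_dim J (j+2)) c"
    using assoc_mult_mat_vec[OF bet_E_carrier[OF j] sec_carrier unit_vec_carrier] sec_unit_vec[of "j+2" c] j c
    by simp
  finally show "(sec j * bet (Delta J) j) *\<^sub>v unit_vec (delta_dim J (j+2)) c
      = (bet E j * sec (j+2)) *\<^sub>v unit_vec (delta_dim J (j+2)) c" .
qed (use mult_carrier_mat[OF sec_carrier bet_Delta_carrier]
    mult_carrier_mat[OF bet_E_carrier[OF j] sec_carrier] in auto)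

lemma sec_is_hom: "is_hom t (Delta J) E sec"
  unfolding is_hom_def using sec_carrier sec_alp sec_bet by auto

end

theorem theorem2p3:
  fixes t :: nat and J :: "nat set"
  assumes "alg_closed_field TYPE('k::field)"
    and "t \<ge> 3"
    and "standard t J" and "J \<noteq> {}"
  shows "Ext1_zero t (Delta J :: 'k qrep) (Delta J)"
  unfolding Ext1_zero_def
proof (intro allI impI)
  fix E :: "'k qrep" and f g
  assume "short_exact t (Delta J) E (Delta J) f g"
  then interpret Delta_self_extension t J E f g
    using assms(3) by unfold_locales
  show "\<exists>s. is_hom t (Delta J) E s \<and> (\<forall>i\<in>{1..t}. g i * s i = 1\<^sub>m (dimv (Delta J) i))"
    using sec_is_hom g_sec by auto
qed

end
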